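(* For each $n\ge 1$ let $G_n$ be a random graph with $n$ vertices drawn from a given class of random graphs. Let $d_{n,k}$ be the probability that a uniformly randomly selected vertex of $G_n$ has degree $k$, and let $d_{n,k,\ell}$ be the probability that two different uniformly randomly selected (ordered) vertices of $G_n$ have degrees $k$ and $\ell$, respectively. Suppose that: 1. There exists a limiting degree distribution $(\overline d_k)_{k\ge1}$ with $\log \overline d_k \sim k\log q$ as $k\to\infty$, where $q$ is a real constant with $0<q<1$. 2. As $n\to\infty$, $k\to\infty$, $\ell\to\infty$, and uniformly for $k,\ell\le C\log n$ (for an arbitrary constant $C>0$), $d_{n,k}\sim \overline d_k$ and $d_{n,k,\ell}\sim \overline d_k\,\overline d_\ell$. 3. There exists $\overline q<1$ such that, uniformly for all $n,k,\ell\ge1$, $d_{n,k}=O(\overline q^{\,k})$ and $d_{n,k,\ell}=O(\overline q^{\,k+\ell})$. Let $\Delta_n$ be the maximum degree of $G_n$. Then $\Delta_n/\log n \to 1/\log(1/q)$ in probability, and $\mathbb{E}\,\Delta_n \sim \frac{1}{\log(1/q)}\log n$ as $n\to\infty$. *)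

theory Defs
  imports "HOL-Probability.Probability"
begin

definition simple_graph_on :: "nat \<Rightarrow> (nat \<Rightarrow> nat \<Rightarrow> bool) \<Rightarrow> bool" where
  "simple_graph_on n E \<longleftrightarrow> (\<forall>u v. E u v \<longrightarrow> u < n \<and> v < n \<and> u \<noteq> v \<and> E v u)"

definition deg :: "nat \<Rightarrow> (nat \<Rightarrow> nat \<Rightarrow> bool) \<Rightarrow> nat \<Rightarrow> nat" where
  "deg n E v = card {u. u < n \<and> E v u}"

definition max_deg :: "nat \<Rightarrow> (nat \<Rightarrow> nat \<Rightarrow> bool) \<Rightarrow> nat" where
  "max_deg n E = Max (deg n E ` {..<n})"

definition dnk :: "(nat \<Rightarrow> (nat \<Rightarrow> nat \<Rightarrow> bool) pmf) \<Rightarrow> nat \<Rightarrow> nat \<Rightarrow> real" where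
  "dnk G n k = (\<Sum>v<n. measure_pmf.prob (G n) {E. deg n E v = k}) / real n"

definition dnkl :: "(nat \<Rightarrow> (nat \<Rightarrow> nat \<Rightarrow> bool) pmf) \<Rightarrow> nat \<Rightarrow> nat \<Rightarrow> nat \<Rightarrow> real" where
  "dnkl G n k l = (\<Sum>v<n. \<Sum>w<n. if v \<noteq> w
      then measure_pmf.prob (G n) {E. deg n E v = k \<and> deg n E w = l} else 0)
      / (real n * (real n - 1))"

end

theory Submission
  imports Defs
begin

text \<open>
  Put \<open>L = ln (1 / q)\<close>; the hypotheses say that \<open>d(n, k) = q ^ (k (1 + o(1)))\<close> for \<open>k\<close>
  of order \<open>ln n\<close>.

  Upper tail: by the union bound, \<open>P(\<Delta> \<ge> \<gamma> ln n)\<close> is at most \<open>n\<close> times the sum of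
  \<open>d(n, k)\<close> over \<open>k \<ge> \<gamma> ln n\<close>. Degrees up to \<open>C ln n\<close> are handled by
  \<open>d(n, k) \<le> 2 dbar(k)\<close>, larger ones by the uniform geometric bound, and the result is
  \<open>O(n ^ (1 - \<gamma> L + o(1)))\<close>. It tends to \<open>0\<close> when \<open>\<gamma> L > 1\<close>, and even after
  multiplication by \<open>n\<close> when \<open>\<gamma> L > 2\<close>.

  Lower tail: for \<open>k = \<lceil>\<beta> ln n\<rceil>\<close> with \<open>\<beta> L < 1\<close>, the number \<open>X\<close> of vertices of
  degree \<open>k\<close> has mean \<open>n d(n, k) \<rightarrow> \<infinity>\<close>, and \<open>E X\<^sup>2 = E X + n (n - 1) d(n, k, k)\<close>
  is asymptotic to \<open>(E X)\<^sup>2\<close> because \<open>d(n, k, k) \<sim> dbar(k)\<^sup>2\<close>. Chebyshev's inequality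
  gives \<open>P(X = 0) \<rightarrow> 0\<close>.

  As \<open>0 \<le> \<Delta> \<le> n\<close>, the two tail estimates also determine \<open>E \<Delta>\<close> asymptotically.
\<close>

section \<open>Degrees and the first-moment bound\<close>

lemma deg_le: "deg n E v \<le> n"
  unfolding deg_def by (rule order.trans[OF card_mono[of "{..<n}"]]) auto

lemma deg_le_max_deg: "v < n \<Longrightarrow> deg n E v \<le> max_deg n E"
  unfolding max_deg_def by (intro Max_ge) auto

lemma max_deg_attained: "n \<ge> 1 \<Longrightarrow> \<exists>v<n. max_deg n E = deg n E v"
  unfolding max_deg_def by (metis Max_in finite_imageI finite_lessThan image_iff image_is_empty
      lessThan_iff lessThan_empty_iff not_one_le_zero)

lemma max_deg_le: "n \<ge> 1 \<Longrightarrow> max_deg n E \<le> n"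
  using max_deg_attained deg_le by metis

lemma sum_prob_deg_eq_dnk: "(\<Sum>v<n. measure_pmf.prob (G n) {E. deg n E v = k}) = real n * dnk G n k"
  unfolding dnk_def by (cases "n = 0") auto

lemma dnk_nonneg: "dnk G n k \<ge> 0"
  unfolding dnk_def by (intro divide_nonneg_nonneg sum_nonneg) auto

lemma dnkl_nonneg: "dnkl G n k l \<ge> 0"
proof -
  have "0 \<le> real n * (real n - 1)" by (cases n) auto
  then show ?thesis unfolding dnkl_def by (intro divide_nonneg_nonneg sum_nonneg) auto
qed

lemma prob_max_deg_ge_le:
  assumes "n \<ge> 1"
  shows "measure_pmf.prob (G n) {E. m \<le> max_deg n E} \<le> (\<Sum>k=m..n. real n * dnk G n k)"
proof -
  have "{E. m \<le> max_deg n E} \<subseteq> (\<Union>(v, k)\<in>{..<n} \<times> {m..n}. {E. deg n E v = k})"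
  proof
    fix E assume "E \<in> {E. m \<le> max_deg n E}"
    moreover obtain v where "v < n" "max_deg n E = deg n E v"
      using max_deg_attained[OF assms] by blast
    ultimately show "E \<in> (\<Union>(v, k)\<in>{..<n} \<times> {m..n}. {E. deg n E v = k})"
      using deg_le[of n E v] by (intro UN_I[of "(v, deg n E v)"]) auto
  qed
  then have "measure_pmf.prob (G n) {E. m \<le> max_deg n E}
      \<le> measure_pmf.prob (G n) (\<Union>(v, k)\<in>{..<n} \<times> {m..n}. {E. deg n E v = k})"
    by (intro measure_pmf.finite_measure_mono) auto
  also have "\<dots> \<le> (\<Sum>(v, k)\<in>{..<n} \<times> {m..n}. measure_pmf.prob (G n) {E. deg n E v = k})"
    using measure_pmf.finite_measure_subadditive_finite[of "{..<n} \<times> {m..n}" "\<lambda>(v, k). {E. deg n E v = k}"]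
    by (simp add: split_def)
  also have "\<dots> = (\<Sum>k=m..n. \<Sum>v<n. measure_pmf.prob (G n) {E. deg n E v = k})"
    by (simp add: sum.cartesian_product[symmetric] sum.swap[of _ "{..<n}"])
  finally show ?thesis by (simp add: sum_prob_deg_eq_dnk)
qed

section \<open>The second-moment method\<close>

lemma prob_none_le_second_moment:
  fixes M :: "'a pmf" and A :: "'i \<Rightarrow> 'a set"
  assumes "finite I" and pos: "0 < (\<Sum>i\<in>I. measure_pmf.prob M (A i))"
  shows "measure_pmf.prob M {x. \<forall>i\<in>I. x \<notin> A i}
    \<le> (\<Sum>i\<in>I. \<Sum>j\<in>I. measure_pmf.prob M (A i \<inter> A j)) / (\<Sum>i\<in>I. measure_pmf.prob M (A i))\<^sup>2 - 1"
proof -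
  define \<mu> where "\<mu> = (\<Sum>i\<in>I. measure_pmf.prob M (A i))"
  define S where "S = (\<Sum>i\<in>I. \<Sum>j\<in>I. measure_pmf.prob M (A i \<inter> A j))"
  define X where "X x = (\<Sum>i\<in>I. indicator (A i) x :: real)" for x
  have X_sq: "(X x)\<^sup>2 = (\<Sum>i\<in>I. \<Sum>j\<in>I. indicator (A i \<inter> A j) x)" for x
    unfolding X_def power2_eq_square sum_product by (simp add: indicator_inter_arith)
  have X_bound: "\<bar>X x\<bar> \<le> card I" for x
    unfolding X_def by (rule order.trans[OF sum_abs]) (auto intro: order.trans[OF sum_mono[of I _ "\<lambda>_. 1"]])
  have int_X: "integrable M X"
    using X_bound by (intro measure_pmf.integrable_const_bound[where B="card I"]) auto
  have int_X_sq: "integrable M (\<lambda>x. (X x)\<^sup>2)"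
    using power_mono[OF X_bound abs_ge_zero, of _ 2]
    by (intro measure_pmf.integrable_const_bound[where B="card I ^ 2"]) auto
  have int_indicator: "integrable M (indicator B :: 'a \<Rightarrow> real)" for B
    by (intro measure_pmf.integrable_const_bound[where B=1]) auto
  have E_X: "measure_pmf.expectation M X = \<mu>"
    unfolding X_def \<mu>_def by (simp add: int_indicator)
  have E_X_sq: "measure_pmf.expectation M (\<lambda>x. (X x)\<^sup>2) = S"
    unfolding X_sq S_def by (simp add: int_indicator)
  have "{x. \<forall>i\<in>I. x \<notin> A i} \<subseteq> {x \<in> space M. \<mu> \<le> \<bar>X x - measure_pmf.expectation M X\<bar>}"
    using pos by (auto simp: X_def E_X \<mu>_def)
  then have "measure_pmf.prob M {x. \<forall>i\<in>I. x \<notin> A i}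
      \<le> measure_pmf.prob M {x \<in> space M. \<mu> \<le> \<bar>X x - measure_pmf.expectation M X\<bar>}"
    by (intro measure_pmf.finite_measure_mono) auto
  also have "\<dots> \<le> measure_pmf.variance M X / \<mu>\<^sup>2"
    using pos int_X_sq unfolding \<mu>_def by (intro measure_pmf.Chebyshev_inequality) auto
  also have "\<dots> = (S - \<mu>\<^sup>2) / \<mu>\<^sup>2"
    using measure_pmf.variance_eq[OF int_X int_X_sq] by (simp add: E_X E_X_sq)
  finally show ?thesis
    using pos by (simp add: S_def \<mu>_def diff_divide_distrib)
qed

lemma sum_prob_deg_pairs_eq:
  assumes "n \<ge> 2"
  shows "(\<Sum>v<n. \<Sum>w<n. measure_pmf.prob (G n) ({E. deg n E v = k} \<inter> {E. deg n E w = k}))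
    = real n * dnk G n k + real n * (real n - 1) * dnkl G n k k"
proof -
  let ?P = "\<lambda>v w. measure_pmf.prob (G n) ({E. deg n E v = k} \<inter> {E. deg n E w = k})"
  have "?P v w = (if v = w then measure_pmf.prob (G n) {E. deg n E v = k} else 0)
      + (if v \<noteq> w then measure_pmf.prob (G n) {E. deg n E v = k \<and> deg n E w = k} else 0)" for v w
    by (auto simp: Collect_conj_eq)
  then have "(\<Sum>v<n. \<Sum>w<n. ?P v w) = (\<Sum>v<n. measure_pmf.prob (G n) {E. deg n E v = k})
      + (\<Sum>v<n. \<Sum>w<n. if v \<noteq> w then measure_pmf.prob (G n) {E. deg n E v = k \<and> deg n E w = k} else 0)"
    by (simp add: sum.distrib)
  also have "\<dots> = real n * dnk G n k + real n * (real n - 1) * dnkl G n k k"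
    using assms by (simp add: sum_prob_deg_eq_dnk dnkl_def)
  finally show ?thesis .
qed

lemma prob_no_vertex_of_degree_le:
  assumes n: "n \<ge> 2" and pos: "dnk G n k > 0"
  shows "measure_pmf.prob (G n) {E. \<forall>v<n. deg n E v \<noteq> k}
    \<le> 1 / (real n * dnk G n k) + dnkl G n k k / (dnk G n k)\<^sup>2 - 1"
proof -
  have "measure_pmf.prob (G n) {E. \<forall>v<n. deg n E v \<noteq> k}
      \<le> (real n * dnk G n k + real n * (real n - 1) * dnkl G n k k) / (real n * dnk G n k)\<^sup>2 - 1"
    using prob_none_le_second_moment[of "{..<n}" "G n" "\<lambda>v. {E. deg n E v = k}"] n pos
    by (simp add: sum_prob_deg_eq_dnk sum_prob_deg_pairs_eq Ball_def)
  also have "\<dots> = 1 / (real n * dnk G n k) + (1 - 1 / real n) * (dnkl G n k k / (dnk G n k)\<^sup>2) - 1"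
    using n pos by (simp add: field_simps power2_eq_square)
  also have "\<dots> \<le> 1 / (real n * dnk G n k) + dnkl G n k k / (dnk G n k)\<^sup>2 - 1"
    using mult_left_le_one_le[of "dnkl G n k k / (dnk G n k)\<^sup>2" "1 - 1 / real n"] n
    by (simp add: dnkl_nonneg)
  finally show ?thesis .
qed

section \<open>Expectations of bounded random variables\<close>

lemma expectation_le_by_thresholds:
  fixes X :: "'a \<Rightarrow> real"
  assumes X: "\<And>x. 0 \<le> X x" "\<And>x. X x \<le> b" and st: "0 \<le> s" "s \<le> t"
  shows "measure_pmf.expectation M X
    \<le> s + t * measure_pmf.prob M {x. s \<le> X x} + b * measure_pmf.prob M {x. t \<le> X x}"
proof -
  let ?Y = "\<lambda>x. s + t * indicator {x. s \<le> X x} x + b * indicator {x. t \<le> X x} x :: real"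
  have b: "0 \<le> b" using X order.trans by blast
  have int_Y: "integrable M ?Y"
    using st b by (intro measure_pmf.integrable_const_bound[where B="s + t + b"]) (auto simp: indicator_def)
  have "X x \<le> s + t + b" for x
    using X(2)[of x] st by linarith
  then have "measure_pmf.expectation M X \<le> measure_pmf.expectation M ?Y"
    using X st b
    by (intro integral_mono int_Y measure_pmf.integrable_const_bound[where B=b]) (auto simp: indicator_def)
  also have "\<dots> = s + t * measure_pmf.prob M {x. s \<le> X x} + b * measure_pmf.prob M {x. t \<le> X x}"
    using st b by (simp add: int_Y measure_pmf.integrable_const_bound[where B=1])
  finally show ?thesis .
qed

lemma expectation_ge_threshold:
  fixes X :: "'a \<Rightarrow> real"
  assumes X: "\<And>x. 0 \<le> X x" "\<And>x. X x \<le> b" and "0 < t"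
  shows "t * (1 - measure_pmf.prob M {x. X x < t}) \<le> measure_pmf.expectation M X"
proof -
  have "{x. X x < t} = space M - {x. t \<le> X x}"
    by auto
  then have "measure_pmf.prob M {x. X x < t} = 1 - measure_pmf.prob M {x. t \<le> X x}"
    using measure_pmf.prob_compl[of "{x. t \<le> X x}" M] by simp
  moreover have "measure_pmf.prob M {x. t \<le> X x} \<le> measure_pmf.expectation M X / t"
    using integral_Markov_inequality_measure[of M X UNIV t] X \<open>0 < t\<close>
    by (simp add: measure_pmf.integrable_const_bound[where B=b])
  ultimately show ?thesis
    using \<open>0 < t\<close> by (simp add: pos_le_divide_eq mult.commute)
qed

section \<open>Real-analytic estimates\<close>

lemma deviation_subset_tails:
  fixes X :: "'a \<Rightarrow> real"
  assumes "0 < l" "a - \<epsilon> \<le> \<beta>"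
  shows "{x. \<epsilon> < \<bar>X x / l - a\<bar>} \<subseteq> {x. (a + \<epsilon>) * l \<le> X x} \<union> {x. X x < \<beta> * l}"
proof
  fix x assume "x \<in> {x. \<epsilon> < \<bar>X x / l - a\<bar>}"
  then have "a + \<epsilon> < X x / l \<or> X x / l < a - \<epsilon>"
    by auto
  then have "(a + \<epsilon>) * l < X x \<or> X x < (a - \<epsilon>) * l"
    using assms by (simp add: pos_less_divide_eq pos_divide_less_eq)
  moreover have "(a - \<epsilon>) * l \<le> \<beta> * l"
    using assms by (intro mult_right_mono) auto
  ultimately show "x \<in> {x. (a + \<epsilon>) * l \<le> X x} \<union> {x. X x < \<beta> * l}"
    by auto
qed

lemma pow_le_powr_of_le:
  fixes r x a :: real
  assumes "0 < r" "r \<le> 1" "0 < x" "a * ln x \<le> real m"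
  shows "r ^ m \<le> x powr (a * ln r)"
proof -
  have "r ^ m = r powr real m" using assms by (simp add: powr_realpow)
  also have "\<dots> \<le> r powr (a * ln x)" using assms by (intro powr_mono') auto
  also have "\<dots> = x powr (a * ln r)" using assms by (simp add: powr_def mult_ac)
  finally show ?thesis .
qed

lemma powr_le_pow_of_le:
  fixes r x a :: real
  assumes "0 < r" "r \<le> 1" "0 < x" "real m \<le> a * ln x + 1"
  shows "r * x powr (a * ln r) \<le> r ^ m"
proof -
  have "r * x powr (a * ln r) = r powr (a * ln x) * r powr 1"
    using assms by (simp add: powr_def mult_ac)
  also have "\<dots> = r powr (a * ln x + 1)"
    by (simp add: powr_add)
  also have "\<dots> \<le> r powr real m" using assms by (intro powr_mono') auto
  also have "\<dots> = r ^ m" using assms by (simp add: powr_realpow)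
  finally show ?thesis .
qed

lemma sum_power_le_geometric_tail:
  fixes p :: real
  assumes "0 \<le> p" "p < 1"
  shows "(\<Sum>k=m..M. p ^ k) \<le> p ^ m / (1 - p)"
proof -
  have "p ^ Suc M \<ge> 0" using assms by simp
  then show ?thesis using assms by (auto simp: sum_gp divide_simps)
qed

lemma sum_le_two_geometric_tails:
  fixes f :: "nat \<Rightarrow> real"
  assumes f: "\<And>k. 0 \<le> f k"
    and head: "\<And>k. m \<le> k \<Longrightarrow> k \<le> M \<Longrightarrow> f k \<le> c * r ^ k"
    and tail: "\<And>k. M < k \<Longrightarrow> f k \<le> B * p ^ k"
    and "0 \<le> r" "r < 1" "0 \<le> p" "p < 1" "0 \<le> c" "0 \<le> B"
  shows "(\<Sum>k=m..n. f k) \<le> c * (r ^ m / (1 - r)) + B * (p ^ Suc M / (1 - p))"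
proof -
  have "(\<Sum>k=m..n. f k) \<le> (\<Sum>k\<in>{m..M} \<union> {Suc M..n}. f k)"
    by (rule sum_mono2) (auto simp: f)
  also have "\<dots> = (\<Sum>k=m..M. f k) + (\<Sum>k=Suc M..n. f k)"
    by (rule sum.union_disjoint) auto
  also have "\<dots> \<le> (\<Sum>k=m..M. c * r ^ k) + (\<Sum>k=Suc M..n. B * p ^ k)"
    by (intro add_mono sum_mono head tail) auto
  also have "\<dots> = c * (\<Sum>k=m..M. r ^ k) + B * (\<Sum>k=Suc M..n. p ^ k)"
    by (simp add: sum_distrib_left)
  also have "\<dots> \<le> c * (r ^ m / (1 - r)) + B * (p ^ Suc M / (1 - p))"
    using assms by (intro add_mono mult_left_mono sum_power_le_geometric_tail) auto
  finally show ?thesis .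
qed

lemma tendsto_ln_div_of_asymp_equiv:
  fixes d :: "nat \<Rightarrow> real"
  assumes "(\<lambda>k. ln (d k)) \<sim>[at_top] (\<lambda>k. real k * c)" "c \<noteq> 0"
  shows "((\<lambda>k. ln (d k) / real k) \<longlongrightarrow> c) at_top"
proof -
  have "eventually (\<lambda>k. ln (d k) \<noteq> 0 \<or> real k * c \<noteq> 0) at_top"
    using eventually_gt_at_top[of 0] by eventually_elim (use \<open>c \<noteq> 0\<close> in auto)
  then have "((\<lambda>k. ln (d k) / (real k * c) * c) \<longlongrightarrow> 1 * c) at_top"
    by (intro tendsto_mult tendsto_const asymp_equivD_strong[OF assms(1)])
  moreover have "eventually (\<lambda>k. ln (d k) / (real k * c) * c = ln (d k) / real k) at_top"
    using \<open>c \<noteq> 0\<close> by simp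
  ultimately show ?thesis by (simp add: tendsto_cong)
qed

lemma eventually_le_power_of_ln_asymp:
  fixes d :: "nat \<Rightarrow> real"
  assumes "(\<lambda>k. ln (d k)) \<sim>[at_top] (\<lambda>k. real k * ln q)" "0 < q" "q \<noteq> 1" "q < r"
  shows "eventually (\<lambda>k. d k \<le> r ^ k) at_top"
proof -
  have "eventually (\<lambda>k. ln (d k) / real k < ln r) at_top"
    using assms by (intro order_tendstoD(2)[OF tendsto_ln_div_of_asymp_equiv]) auto
  with eventually_gt_at_top[of 0] show ?thesis
  proof eventually_elim
    case (elim k)
    then have "ln (d k) < ln (r ^ k)"
      using assms by (simp add: ln_realpow field_simps)
    moreover have "0 < r ^ k"
      using assms by simp
    ultimately show ?case
      by (cases "d k > 0") auto
  qed
qed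

lemma eventually_power_le_of_ln_asymp:
  fixes d :: "nat \<Rightarrow> real"
  assumes "(\<lambda>k. ln (d k)) \<sim>[at_top] (\<lambda>k. real k * ln q)" "eventually (\<lambda>k. 0 < d k) at_top"
    and "0 < r" "r < q" "q \<noteq> 1"
  shows "eventually (\<lambda>k. r ^ k \<le> d k) at_top"
proof -
  have "eventually (\<lambda>k. ln r < ln (d k) / real k) at_top"
    using assms by (intro order_tendstoD(1)[OF tendsto_ln_div_of_asymp_equiv]) auto
  with assms(2) eventually_gt_at_top[of 0] show ?thesis
  proof eventually_elim
    case (elim k)
    then have "ln (r ^ k) < ln (d k)"
      using assms by (simp add: ln_realpow field_simps)
    then show ?case
      using assms elim by simp
  qed
qed

lemma filterlim_mult_ln_sequentially:
  "0 < \<gamma> \<Longrightarrow> filterlim (\<lambda>n. \<gamma> * ln (real n)) at_top sequentially"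
  by (intro filterlim_tendsto_pos_mult_at_top[OF tendsto_const]
      filterlim_compose[OF ln_at_top filterlim_real_sequentially])

lemma filterlim_powr_sequentially:
  assumes "0 < \<theta>"
  shows "filterlim (\<lambda>n. real n powr \<theta>) at_top sequentially"
proof -
  have lim: "filterlim (\<lambda>n. exp (\<theta> * ln (real n))) at_top sequentially"
    using assms by (intro filterlim_compose[OF exp_at_top] filterlim_mult_ln_sequentially)
  have eq: "eventually (\<lambda>n. exp (\<theta> * ln (real n)) = real n powr \<theta>) sequentially"
    using eventually_gt_at_top[of 0] by eventually_elim (simp add: powr_def)
  show ?thesis
    using lim filterlim_cong[OF refl refl eq] by simp
qed

lemma filterlim_nat_ceiling_mult_ln:
  assumes "0 < \<gamma>"
  shows "filterlim (\<lambda>n. nat \<lceil>\<gamma> * ln (real n)\<rceil>) at_top sequentially"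
proof (rule filterlim_at_top_mono)
  show "filterlim (\<lambda>n. nat \<lfloor>\<gamma> * ln (real n)\<rfloor>) at_top sequentially"
    using assms by (intro filterlim_compose[OF filterlim_nat_sequentially]
        filterlim_compose[OF filterlim_floor_sequentially] filterlim_mult_ln_sequentially)
qed (intro always_eventually allI nat_mono floor_le_ceiling)

lemma real_nat_ceiling_mult_ln_le:
  assumes "0 \<le> \<beta>"
  shows "eventually (\<lambda>n. real (nat \<lceil>\<beta> * ln (real n)\<rceil>) \<le> (\<beta> + 1) * ln (real n)) sequentially"
proof -
  have "eventually (\<lambda>n. 1 \<le> ln (real n)) sequentially"
    using filterlim_mult_ln_sequentially[of 1] by (simp add: filterlim_at_top)
  then show ?thesis
  proof eventually_elim
    case (elim n)
    then have "real (nat \<lceil>\<beta> * ln (real n)\<rceil>) = real_of_int \<lceil>\<beta> * ln (real n)\<rceil>"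
      using assms by simp
    then show ?case
      using elim of_int_ceiling_le_add_one[of "\<beta> * ln (real n)"] unfolding distrib_right by linarith
  qed
qed

lemma base_above_with_log_gap:
  fixes q c :: real
  assumes "0 < q" "0 \<le> c" "c < ln (1 / q)"
  obtains r where "q < r" "r < 1" "c < - ln r"
proof
  have "q = exp (- ln (1 / q))"
    using assms by (simp add: ln_div)
  also have "\<dots> < exp (- (c + ln (1 / q)) / 2)"
    using assms by simp
  finally show "q < exp (- (c + ln (1 / q)) / 2)" .
qed (use assms in \<open>auto simp: field_simps\<close>)

lemma base_below_with_log_gap:
  fixes q c :: real
  assumes "0 < q" "ln (1 / q) < c"
  obtains r where "0 < r" "r < q" "- ln r < c"
proof
  have "exp (- (c + ln (1 / q)) / 2) < exp (- ln (1 / q))"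
    using assms by simp
  also have "\<dots> = q"
    using assms by (simp add: ln_div)
  finally show "exp (- (c + ln (1 / q)) / 2) < q" .
qed (use assms in \<open>auto simp: field_simps\<close>)

section \<open>Maximum degree in the degree model\<close>

locale degree_model =
  fixes G :: "nat \<Rightarrow> (nat \<Rightarrow> nat \<Rightarrow> bool) pmf" and dbar :: "nat \<Rightarrow> real" and q p B :: real
  assumes q: "0 < q" "q < 1"
    and dbar_pos: "eventually (\<lambda>k. dbar k > 0) at_top"
    and dbar_log: "(\<lambda>k. ln (dbar k)) \<sim>[at_top] (\<lambda>k. real k * ln q)"
    and unif: "\<And>C \<epsilon>. C > 0 \<Longrightarrow> \<epsilon> > 0 \<Longrightarrow> \<exists>N K. \<forall>n\<ge>N. \<forall>k l.
                 K \<le> k \<and> real k \<le> C * ln (real n) \<and> K \<le> l \<and> real l \<le> C * ln (real n) \<longrightarrow>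
                 \<bar>dnk G n k - dbar k\<bar> \<le> \<epsilon> * dbar k \<and>
                 \<bar>dnkl G n k l - dbar k * dbar l\<bar> \<le> \<epsilon> * (dbar k * dbar l)"
    and p: "0 < p" "p < 1"
    and dnk_le_geometric: "\<And>n k. 1 \<le> n \<Longrightarrow> 1 \<le> k \<Longrightarrow> dnk G n k \<le> B * p ^ k"
begin

lemma B_nonneg: "0 \<le> B"
proof -
  have "0 \<le> B * p"
    using dnk_le_geometric[of 1 1] dnk_nonneg[of G 1 1] by simp
  then show ?thesis
    using p by (simp add: zero_le_mult_iff)
qed

lemma eventually_dnk_le_power:
  assumes "q < r" "0 < \<gamma>" "0 < C"
  shows "eventually (\<lambda>n. \<forall>k. \<gamma> * ln (real n) \<le> real k \<and> real k \<le> C * ln (real n)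
    \<longrightarrow> dnk G n k \<le> 2 * r ^ k) sequentially"
proof -
  obtain K0 where K0: "\<And>k. K0 \<le> k \<Longrightarrow> dbar k \<le> r ^ k"
    using eventually_le_power_of_ln_asymp[OF dbar_log] q assms(1)
    by (auto simp: eventually_at_top_linorder)
  obtain N K where NK: "\<forall>n\<ge>N. \<forall>k l. K \<le> k \<and> real k \<le> C * ln (real n) \<and> K \<le> l \<and> real l \<le> C * ln (real n)
      \<longrightarrow> \<bar>dnk G n k - dbar k\<bar> \<le> 1 * dbar k \<and> \<bar>dnkl G n k l - dbar k * dbar l\<bar> \<le> 1 * (dbar k * dbar l)"
    using unif[OF \<open>0 < C\<close> zero_less_one] by blast
  have "eventually (\<lambda>n. real (max K K0) \<le> \<gamma> * ln (real n)) sequentially"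
    using filterlim_mult_ln_sequentially[OF \<open>0 < \<gamma>\<close>] by (simp add: filterlim_at_top)
  with eventually_ge_at_top[of N] show ?thesis
  proof eventually_elim
    case (elim n)
    show ?case
    proof (intro allI impI)
      fix k assume k: "\<gamma> * ln (real n) \<le> real k \<and> real k \<le> C * ln (real n)"
      then have "real (max K K0) \<le> real k"
        using elim by linarith
      then have "K \<le> k" "K0 \<le> k"
        by simp_all
      then have "dnk G n k \<le> 2 * dbar k"
        using NK elim k by (auto simp: abs_le_iff)
      also have "\<dots> \<le> 2 * r ^ k"
        using K0 \<open>K0 \<le> k\<close> by simp
      finally show "dnk G n k \<le> 2 * r ^ k" .
    qed
  qed
qed

lemma prob_max_deg_ge_le_powr:
  assumes n: "2 \<le> n" and r: "0 < r" "r < 1" and "0 < \<gamma>" "\<gamma> \<le> C"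
    and head: "\<forall>k. \<gamma> * ln (real n) \<le> real k \<and> real k \<le> C * ln (real n) \<longrightarrow> dnk G n k \<le> 2 * r ^ k"
  shows "measure_pmf.prob (G n) {E. \<gamma> * ln (real n) \<le> real (max_deg n E)}
    \<le> 2 / (1 - r) * real n powr (1 + \<gamma> * ln r) + B / (1 - p) * real n powr (1 + C * ln p)"
proof -
  define m where "m = nat \<lceil>\<gamma> * ln (real n)\<rceil>"
  define M where "M = nat \<lfloor>C * ln (real n)\<rfloor>"
  have ln_n: "0 < ln (real n)"
    using n by simp
  have m: "\<gamma> * ln (real n) \<le> real m"
    unfolding m_def by linarith
  have M: "real M \<le> C * ln (real n)" "C * ln (real n) \<le> real (Suc M)"
    unfolding M_def using ln_n assms by (auto intro!: mult_nonneg_nonneg) linarith+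
  have "measure_pmf.prob (G n) {E. \<gamma> * ln (real n) \<le> real (max_deg n E)}
      = measure_pmf.prob (G n) {E. m \<le> max_deg n E}"
    by (simp add: m_def)
  also have "\<dots> \<le> (\<Sum>k=m..n. real n * dnk G n k)"
    using n by (intro prob_max_deg_ge_le) simp
  also have "\<dots> = real n * (\<Sum>k=m..n. dnk G n k)"
    by (simp add: sum_distrib_left)
  also have "\<dots> \<le> real n * (2 * (r ^ m / (1 - r)) + B * (p ^ Suc M / (1 - p)))"
  proof (intro mult_left_mono sum_le_two_geometric_tails)
    show "dnk G n k \<le> 2 * r ^ k" if "m \<le> k" "k \<le> M" for k
      using head m M that by (meson of_nat_le_iff order.trans)
    show "dnk G n k \<le> B * p ^ k" if "M < k" for k
      using n that by (intro dnk_le_geometric) auto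
  qed (use r p B_nonneg dnk_nonneg in auto)
  also have "\<dots> \<le> real n * (2 / (1 - r) * real n powr (\<gamma> * ln r) + B / (1 - p) * real n powr (C * ln p))"
  proof -
    have "r ^ m \<le> real n powr (\<gamma> * ln r)"
      using r n m by (intro pow_le_powr_of_le) auto
    moreover have "p ^ Suc M \<le> real n powr (C * ln p)"
      using p n M by (intro pow_le_powr_of_le) auto
    ultimately show ?thesis
      using r p B_nonneg
      by (intro mult_left_mono add_mono) (auto simp: divide_right_mono mult_left_mono)
  qed
  also have "\<dots> = 2 / (1 - r) * real n powr (1 + \<gamma> * ln r) + B / (1 - p) * real n powr (1 + C * ln p)"
    using n by (simp add: powr_add algebra_simps)
  finally show ?thesis .
qed

lemma prob_max_deg_ge_tendsto_0:
  assumes "1 + real j < \<gamma> * ln (1 / q)"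
  shows "((\<lambda>n. real n ^ j * measure_pmf.prob (G n) {E. \<gamma> * ln (real n) \<le> real (max_deg n E)})
    \<longlongrightarrow> 0) sequentially"
proof -
  have "0 < \<gamma> * ln (1 / q)"
    using assms of_nat_0_le_iff[of j] by linarith
  then have \<gamma>: "0 < \<gamma>"
    using q by (simp add: zero_less_mult_iff)
  then have "(1 + real j) / \<gamma> < ln (1 / q)"
    using assms by (simp add: divide_less_eq mult.commute)
  then obtain r where r: "q < r" "r < 1" "(1 + real j) / \<gamma> < - ln r"
    using base_above_with_log_gap[of q "(1 + real j) / \<gamma>"] q \<gamma> by auto
  then have r_exponent: "1 + real j + \<gamma> * ln r < 0"
    using \<gamma> by (simp add: field_simps)
  \<comment> \<open>\<open>C\<close> is so large that the degrees above \<open>C ln n\<close> contribute \<open>o(n\<^bsup>-1-j\<^esup>)\<close>\<close>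
  define lp where "lp = - ln p"
  define C where "C = max \<gamma> ((2 + real j) / lp)"
  have "0 < lp" "(2 + real j) / lp \<le> C"
    using p by (simp_all add: lp_def C_def)
  then have "2 + real j \<le> C * lp"
    by (simp add: pos_divide_le_eq)
  then have C: "0 < C" "\<gamma> \<le> C" "1 + real j + C * ln p < 0"
    using \<gamma> by (auto simp: C_def lp_def)
  define F where "F n = 2 / (1 - r) * real n powr (1 + real j + \<gamma> * ln r)
    + B / (1 - p) * real n powr (1 + real j + C * ln p)" for n
  have "F \<longlonglongrightarrow> 2 / (1 - r) * 0 + B / (1 - p) * 0"
    unfolding F_def using r_exponent C
    by (intro tendsto_add tendsto_mult tendsto_const tendsto_neg_powr filterlim_real_sequentially) auto
  then have F: "F \<longlonglongrightarrow> 0"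
    by simp
  have bound: "eventually (\<lambda>n. real n ^ j
      * measure_pmf.prob (G n) {E. \<gamma> * ln (real n) \<le> real (max_deg n E)} \<le> F n) sequentially"
    using eventually_dnk_le_power[OF r(1) \<gamma> C(1)] eventually_ge_at_top[of 2]
  proof eventually_elim
    case (elim n)
    have "real n ^ j * measure_pmf.prob (G n) {E. \<gamma> * ln (real n) \<le> real (max_deg n E)}
      \<le> real n ^ j * (2 / (1 - r) * real n powr (1 + \<gamma> * ln r) + B / (1 - p) * real n powr (1 + C * ln p))"
      using q r by (intro mult_left_mono prob_max_deg_ge_le_powr[OF elim(2) _ _ \<gamma> C(2) elim(1)]) auto
    also have "\<dots> = F n"
      using elim by (simp add: F_def powr_add powr_realpow algebra_simps)
    finally show ?case .
  qed
  show ?thesis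
    by (rule tendsto_sandwich[OF _ bound tendsto_const F]) simp
qed

lemma dnk_dbar_ratio_tendsto:
  assumes k: "filterlim k at_top sequentially"
    and "0 < C" "eventually (\<lambda>n. real (k n) \<le> C * ln (real n)) sequentially"
  shows "((\<lambda>n. dnk G n (k n) / dbar (k n)) \<longlongrightarrow> 1) sequentially"
    and "((\<lambda>n. dnkl G n (k n) (k n) / (dbar (k n))\<^sup>2) \<longlongrightarrow> 1) sequentially"
proof -
  have close: "eventually (\<lambda>n. 0 < dbar (k n)
      \<and> \<bar>dnk G n (k n) / dbar (k n) - 1\<bar> \<le> \<epsilon>
      \<and> \<bar>dnkl G n (k n) (k n) / (dbar (k n))\<^sup>2 - 1\<bar> \<le> \<epsilon>) sequentially" if "0 < \<epsilon>" for \<epsilon>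
  proof -
    obtain N K where NK: "\<forall>n\<ge>N. \<forall>k l. K \<le> k \<and> real k \<le> C * ln (real n) \<and> K \<le> l \<and> real l \<le> C * ln (real n)
        \<longrightarrow> \<bar>dnk G n k - dbar k\<bar> \<le> \<epsilon> * dbar k \<and> \<bar>dnkl G n k l - dbar k * dbar l\<bar> \<le> \<epsilon> * (dbar k * dbar l)"
      using unif[OF \<open>0 < C\<close> \<open>0 < \<epsilon>\<close>] by blast
    have "eventually (\<lambda>n. K \<le> k n) sequentially"
      using k by (simp add: filterlim_at_top)
    with eventually_compose_filterlim[OF dbar_pos k] eventually_ge_at_top[of N] assms(3)
    show ?thesis
    proof eventually_elim
      case (elim n)
      then have "\<bar>dnk G n (k n) - dbar (k n)\<bar> \<le> \<epsilon> * dbar (k n)"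
        "\<bar>dnkl G n (k n) (k n) - (dbar (k n))\<^sup>2\<bar> \<le> \<epsilon> * (dbar (k n))\<^sup>2"
        using NK by (auto simp: power2_eq_square)
      then show ?case
        using elim by (simp add: abs_le_iff field_simps)
    qed
  qed
  show "((\<lambda>n. dnk G n (k n) / dbar (k n)) \<longlongrightarrow> 1) sequentially"
  proof (rule tendstoI)
    fix \<epsilon> :: real assume "0 < \<epsilon>"
    with close[of "\<epsilon> / 2"] show "eventually (\<lambda>n. dist (dnk G n (k n) / dbar (k n)) 1 < \<epsilon>) sequentially"
      by (auto elim!: eventually_mono simp: dist_real_def)
  qed
  show "((\<lambda>n. dnkl G n (k n) (k n) / (dbar (k n))\<^sup>2) \<longlongrightarrow> 1) sequentially"
  proof (rule tendstoI)
    fix \<epsilon> :: real assume "0 < \<epsilon>"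
    with close[of "\<epsilon> / 2"]
    show "eventually (\<lambda>n. dist (dnkl G n (k n) (k n) / (dbar (k n))\<^sup>2) 1 < \<epsilon>) sequentially"
      by (auto elim!: eventually_mono simp: dist_real_def)
  qed
qed

lemma typical_degree_ratios_tendsto:
  assumes "0 < \<beta>"
  defines "k \<equiv> \<lambda>n. nat \<lceil>\<beta> * ln (real n)\<rceil>"
  shows "((\<lambda>n. dnk G n (k n) / dbar (k n)) \<longlongrightarrow> 1) sequentially"
    and "((\<lambda>n. dnkl G n (k n) (k n) / (dbar (k n))\<^sup>2) \<longlongrightarrow> 1) sequentially"
proof -
  have k: "filterlim k at_top sequentially"
    unfolding k_def by (rule filterlim_nat_ceiling_mult_ln[OF assms(1)])
  have "0 < \<beta> + 1"
    using assms by simp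
  moreover have "eventually (\<lambda>n. real (k n) \<le> (\<beta> + 1) * ln (real n)) sequentially"
    unfolding k_def using assms by (intro real_nat_ceiling_mult_ln_le) simp
  ultimately show "((\<lambda>n. dnk G n (k n) / dbar (k n)) \<longlongrightarrow> 1) sequentially"
    "((\<lambda>n. dnkl G n (k n) (k n) / (dbar (k n))\<^sup>2) \<longlongrightarrow> 1) sequentially"
    using dnk_dbar_ratio_tendsto[OF k] by blast+
qed

lemma filterlim_n_dbar_at_top:
  assumes "0 < \<beta>" "\<beta> * ln (1 / q) < 1"
  shows "filterlim (\<lambda>n. real n * dbar (nat \<lceil>\<beta> * ln (real n)\<rceil>)) at_top sequentially"
proof -
  have "ln (1 / q) < 1 / \<beta>"
    using assms by (simp add: field_simps)
  then obtain r where r: "0 < r" "r < q" "- ln r < 1 / \<beta>"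
    using base_below_with_log_gap q by blast
  then have r_exponent: "0 < 1 + \<beta> * ln r"
    using assms by (simp add: field_simps)
  have "eventually (\<lambda>k. r ^ k \<le> dbar k) at_top"
    using eventually_power_le_of_ln_asymp[OF dbar_log dbar_pos r(1,2)] q by simp
  then have lower: "eventually (\<lambda>n. r ^ nat \<lceil>\<beta> * ln (real n)\<rceil> \<le> dbar (nat \<lceil>\<beta> * ln (real n)\<rceil>)) sequentially"
    using eventually_compose_filterlim filterlim_nat_ceiling_mult_ln[OF \<open>0 < \<beta>\<close>] by blast
  show ?thesis
  proof (rule filterlim_at_top_mono)
    show "filterlim (\<lambda>n. r * real n powr (1 + \<beta> * ln r)) at_top sequentially"
      using r r_exponent by (intro filterlim_tendsto_pos_mult_at_top[OF tendsto_const] filterlim_powr_sequentially)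
    show "eventually (\<lambda>n. r * real n powr (1 + \<beta> * ln r) \<le> real n * dbar (nat \<lceil>\<beta> * ln (real n)\<rceil>))
      sequentially"
      using lower eventually_ge_at_top[of 1]
    proof eventually_elim
      case (elim n)
      have "r * real n powr (1 + \<beta> * ln r) = real n * (r * real n powr (\<beta> * ln r))"
        using elim by (simp add: powr_add)
      also have "\<dots> \<le> real n * r ^ nat \<lceil>\<beta> * ln (real n)\<rceil>"
        using elim assms r q by (intro mult_left_mono powr_le_pow_of_le) auto
      also have "\<dots> \<le> real n * dbar (nat \<lceil>\<beta> * ln (real n)\<rceil>)"
        using elim by (intro mult_left_mono) auto
      finally show ?case .
    qed
  qed
qed

lemma second_moment_bound_tendsto_0:
  assumes "0 < \<beta>" "\<beta> * ln (1 / q) < 1"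
  defines "k \<equiv> \<lambda>n. nat \<lceil>\<beta> * ln (real n)\<rceil>"
  shows "eventually (\<lambda>n. 0 < dnk G n (k n)) sequentially"
    and "((\<lambda>n. 1 / (real n * dnk G n (k n)) + dnkl G n (k n) (k n) / (dnk G n (k n))\<^sup>2 - 1)
      \<longlongrightarrow> 0) sequentially"
proof -
  have k: "filterlim k at_top sequentially"
    unfolding k_def by (rule filterlim_nat_ceiling_mult_ln[OF assms(1)])
  have ratio: "((\<lambda>n. dnk G n (k n) / dbar (k n)) \<longlongrightarrow> 1) sequentially"
    "((\<lambda>n. dnkl G n (k n) (k n) / (dbar (k n))\<^sup>2) \<longlongrightarrow> 1) sequentially"
    using typical_degree_ratios_tendsto[OF assms(1)] by (simp_all add: k_def)
  have dbar_k: "eventually (\<lambda>n. 0 < dbar (k n)) sequentially"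
    by (rule eventually_compose_filterlim[OF dbar_pos k])
  moreover have "eventually (\<lambda>n. 0 < dnk G n (k n) / dbar (k n)) sequentially"
    using ratio(1) by (rule order_tendstoD) simp
  ultimately show "eventually (\<lambda>n. 0 < dnk G n (k n)) sequentially"
    by eventually_elim (simp add: zero_less_divide_iff)
  have "filterlim (\<lambda>n. real n * dbar (k n) * (dnk G n (k n) / dbar (k n))) at_top sequentially"
    using filterlim_n_dbar_at_top[OF assms(1,2)]
    by (intro filterlim_at_top_mult_tendsto_pos[OF ratio(1)]) (simp_all add: k_def)
  moreover have eq: "eventually (\<lambda>n. real n * dbar (k n) * (dnk G n (k n) / dbar (k n))
      = real n * dnk G n (k n)) sequentially"
    using dbar_k by eventually_elim simp
  ultimately have "filterlim (\<lambda>n. real n * dnk G n (k n)) at_top sequentially"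
    using filterlim_cong[OF refl refl eq] by simp
  from tendsto_inverse_0_at_top[OF this]
  have "((\<lambda>n. inverse (real n * dnk G n (k n))
      + (dnkl G n (k n) (k n) / (dbar (k n))\<^sup>2) / (dnk G n (k n) / dbar (k n))\<^sup>2 - 1) \<longlongrightarrow> 0 + 1 / 1\<^sup>2 - 1)
      sequentially"
    by (intro tendsto_diff tendsto_add tendsto_divide tendsto_power ratio tendsto_const) auto
  then have lim: "((\<lambda>n. inverse (real n * dnk G n (k n))
      + (dnkl G n (k n) (k n) / (dbar (k n))\<^sup>2) / (dnk G n (k n) / dbar (k n))\<^sup>2 - 1) \<longlongrightarrow> 0) sequentially"
    by simp
  have eq: "eventually (\<lambda>n. inverse (real n * dnk G n (k n))
      + (dnkl G n (k n) (k n) / (dbar (k n))\<^sup>2) / (dnk G n (k n) / dbar (k n))\<^sup>2 - 1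
      = 1 / (real n * dnk G n (k n)) + dnkl G n (k n) (k n) / (dnk G n (k n))\<^sup>2 - 1) sequentially"
    using dbar_k by eventually_elim (simp add: power_divide inverse_eq_divide)
  show "((\<lambda>n. 1 / (real n * dnk G n (k n)) + dnkl G n (k n) (k n) / (dnk G n (k n))\<^sup>2 - 1)
      \<longlongrightarrow> 0) sequentially"
    by (rule Lim_transform_eventually[OF lim eq])
qed

lemma prob_max_deg_lt_tendsto_0:
  assumes "0 < \<beta>" "\<beta> * ln (1 / q) < 1"
  shows "((\<lambda>n. measure_pmf.prob (G n) {E. real (max_deg n E) < \<beta> * ln (real n)}) \<longlongrightarrow> 0) sequentially"
proof -
  define k where "k n = nat \<lceil>\<beta> * ln (real n)\<rceil>" for n
  note second_moment = second_moment_bound_tendsto_0[OF assms, folded k_def]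
  have bound: "eventually (\<lambda>n. measure_pmf.prob (G n) {E. real (max_deg n E) < \<beta> * ln (real n)}
      \<le> 1 / (real n * dnk G n (k n)) + dnkl G n (k n) (k n) / (dnk G n (k n))\<^sup>2 - 1) sequentially"
    using second_moment(1) eventually_ge_at_top[of 2]
  proof eventually_elim
    case (elim n)
    have "{E. real (max_deg n E) < \<beta> * ln (real n)} \<subseteq> {E. \<forall>v<n. deg n E v \<noteq> k n}"
    proof safe
      fix E v assume "real (max_deg n E) < \<beta> * ln (real n)" "v < n" "deg n E v = k n"
      then show False
        using deg_le_max_deg[of v n E] by (simp add: k_def)
    qed
    then have "measure_pmf.prob (G n) {E. real (max_deg n E) < \<beta> * ln (real n)}
        \<le> measure_pmf.prob (G n) {E. \<forall>v<n. deg n E v \<noteq> k n}"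
      by (intro measure_pmf.finite_measure_mono) auto
    also have "\<dots> \<le> 1 / (real n * dnk G n (k n)) + dnkl G n (k n) (k n) / (dnk G n (k n))\<^sup>2 - 1"
      using elim by (intro prob_no_vertex_of_degree_le) auto
    finally show ?case .
  qed
  show ?thesis
    by (rule tendsto_sandwich[OF _ bound tendsto_const second_moment(2)]) simp
qed

lemma max_deg_over_ln_tendsto_in_probability:
  assumes "0 < \<epsilon>"
  shows "((\<lambda>n. measure_pmf.prob (G n)
    {E. \<bar>real (max_deg n E) / ln (real n) - 1 / ln (1 / q)\<bar> > \<epsilon>}) \<longlongrightarrow> 0) sequentially"
proof -
  define a where "a = 1 / ln (1 / q)"
  have L: "0 < ln (1 / q)"
    using q by simp
  have a: "0 < a" "a * ln (1 / q) = 1"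
    using L by (auto simp: a_def)
  define \<beta> where "\<beta> = max (a - \<epsilon>) (a / 2)"
  have \<beta>: "0 < \<beta>" "\<beta> < a" "a - \<epsilon> \<le> \<beta>"
    using a assms by (auto simp: \<beta>_def)
  have \<beta>L: "\<beta> * ln (1 / q) < 1"
    using mult_strict_right_mono[OF \<beta>(2) L] a by simp
  have "1 + real 0 < (a + \<epsilon>) * ln (1 / q)"
    using a assms L by (simp add: distrib_right)
  from prob_max_deg_ge_tendsto_0[OF this]
  have tails: "((\<lambda>n. measure_pmf.prob (G n) {E. (a + \<epsilon>) * ln (real n) \<le> real (max_deg n E)}
      + measure_pmf.prob (G n) {E. real (max_deg n E) < \<beta> * ln (real n)}) \<longlongrightarrow> 0 + 0) sequentially"
    using \<beta>(1) \<beta>L by (intro tendsto_add prob_max_deg_lt_tendsto_0) auto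
  have bound: "eventually (\<lambda>n. measure_pmf.prob (G n)
      {E. \<bar>real (max_deg n E) / ln (real n) - 1 / ln (1 / q)\<bar> > \<epsilon>}
    \<le> measure_pmf.prob (G n) {E. (a + \<epsilon>) * ln (real n) \<le> real (max_deg n E)}
      + measure_pmf.prob (G n) {E. real (max_deg n E) < \<beta> * ln (real n)}) sequentially"
    using eventually_ge_at_top[of 2]
  proof eventually_elim
    case (elim n)
    have ln_n: "0 < ln (real n)"
      using elim by simp
    have "{E. \<bar>real (max_deg n E) / ln (real n) - 1 / ln (1 / q)\<bar> > \<epsilon>}
      \<subseteq> {E. (a + \<epsilon>) * ln (real n) \<le> real (max_deg n E)} \<union> {E. real (max_deg n E) < \<beta> * ln (real n)}"
      unfolding a_def[symmetric] using ln_n \<beta>(3) by (rule deviation_subset_tails)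
    then show ?case
      by (intro order.trans[OF measure_pmf.finite_measure_mono measure_Un_le]) auto
  qed
  show ?thesis
    using tendsto_sandwich[OF _ bound tendsto_const tails] by simp
qed

lemma eventually_expected_max_deg_less:
  assumes "1 / ln (1 / q) < b"
  shows "eventually (\<lambda>n. measure_pmf.expectation (G n) (\<lambda>E. real (max_deg n E)) / ln (real n) < b)
    sequentially"
proof -
  define a where "a = 1 / ln (1 / q)"
  have L: "0 < ln (1 / q)"
    using q by simp
  define \<gamma> where "\<gamma> = (a + b) / 2"
  define C where "C = max \<gamma> (3 * a)"
  have \<gamma>: "0 < \<gamma>" "\<gamma> < b" "1 + real 0 < \<gamma> * ln (1 / q)"
    using assms L by (auto simp: \<gamma>_def a_def field_simps)
  have C: "\<gamma> \<le> C" "1 + real 1 < C * ln (1 / q)"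
    using L by (auto simp: C_def a_def max_def field_simps)
  define P1 where "P1 n = measure_pmf.prob (G n) {E. \<gamma> * ln (real n) \<le> real (max_deg n E)}" for n
  define P2 where "P2 n = measure_pmf.prob (G n) {E. C * ln (real n) \<le> real (max_deg n E)}" for n
  have "((\<lambda>n. real n * P2 n / ln (real n)) \<longlongrightarrow> 0) sequentially"
    using prob_max_deg_ge_tendsto_0[OF C(2)] unfolding P2_def
    by (intro tendsto_divide_0 filterlim_at_top_imp_at_infinity
        filterlim_compose[OF ln_at_top filterlim_real_sequentially]) simp
  then have "((\<lambda>n. \<gamma> + C * P1 n + real n * P2 n / ln (real n)) \<longlongrightarrow> \<gamma> + C * 0 + 0) sequentially"
    using prob_max_deg_ge_tendsto_0[OF \<gamma>(3)] unfolding P1_def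
    by (intro tendsto_add tendsto_mult tendsto_const) simp_all
  then have "eventually (\<lambda>n. \<gamma> + C * P1 n + real n * P2 n / ln (real n) < b) sequentially"
    using \<gamma>(2) by (intro order_tendstoD(2)) simp_all
  with eventually_ge_at_top[of 2] show ?thesis
  proof eventually_elim
    case (elim n)
    have ln_n: "0 < ln (real n)"
      using elim by simp
    have "measure_pmf.expectation (G n) (\<lambda>E. real (max_deg n E))
        \<le> \<gamma> * ln (real n) + C * ln (real n) * P1 n + real n * P2 n"
      unfolding P1_def P2_def using elim \<gamma> C ln_n max_deg_le[of n]
      by (intro expectation_le_by_thresholds) auto
    then have "measure_pmf.expectation (G n) (\<lambda>E. real (max_deg n E)) / ln (real n)
        \<le> \<gamma> + C * P1 n + real n * P2 n / ln (real n)"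
      using ln_n by (simp add: field_simps)
    then show ?case
      using elim by linarith
  qed
qed

lemma eventually_expected_max_deg_greater:
  assumes "b < 1 / ln (1 / q)"
  shows "eventually (\<lambda>n. b < measure_pmf.expectation (G n) (\<lambda>E. real (max_deg n E)) / ln (real n))
    sequentially"
proof -
  define a where "a = 1 / ln (1 / q)"
  have L: "0 < ln (1 / q)"
    using q by simp
  have a: "0 < a" "b < a" "a * ln (1 / q) = 1"
    using assms L by (auto simp: a_def)
  define \<beta> where "\<beta> = (max b 0 + a) / 2"
  have \<beta>: "0 < \<beta>" "b < \<beta>" "\<beta> < a"
    using a by (auto simp: \<beta>_def)
  have \<beta>L: "\<beta> * ln (1 / q) < 1"
    using mult_strict_right_mono[OF \<beta>(3) L] a by simp
  define P where "P n = measure_pmf.prob (G n) {E. real (max_deg n E) < \<beta> * ln (real n)}" for n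
  have "((\<lambda>n. \<beta> * (1 - P n)) \<longlongrightarrow> \<beta> * (1 - 0)) sequentially"
    unfolding P_def using \<beta>(1) \<beta>L by (intro tendsto_mult tendsto_diff tendsto_const prob_max_deg_lt_tendsto_0)
  then have "eventually (\<lambda>n. b < \<beta> * (1 - P n)) sequentially"
    using \<beta>(2) by (intro order_tendstoD(1)) simp_all
  with eventually_ge_at_top[of 2] show ?thesis
  proof eventually_elim
    case (elim n)
    have ln_n: "0 < ln (real n)"
      using elim by simp
    have "\<beta> * ln (real n) * (1 - P n) \<le> measure_pmf.expectation (G n) (\<lambda>E. real (max_deg n E))"
      unfolding P_def using elim \<beta> ln_n max_deg_le[of n]
      by (intro expectation_ge_threshold[where b="real n"]) auto
    then have "\<beta> * (1 - P n) \<le> measure_pmf.expectation (G n) (\<lambda>E. real (max_deg n E)) / ln (real n)"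
      using ln_n by (simp add: field_simps)
    then show ?case
      using elim by linarith
  qed
qed

lemma expected_max_deg_asymp_equiv:
  "(\<lambda>n. measure_pmf.expectation (G n) (\<lambda>E. real (max_deg n E))) \<sim>[at_top] (\<lambda>n. ln (real n) / ln (1 / q))"
proof (rule asymp_equivI')
  have "((\<lambda>n. measure_pmf.expectation (G n) (\<lambda>E. real (max_deg n E)) / ln (real n)) \<longlongrightarrow> 1 / ln (1 / q))
      sequentially"
    by (rule order_tendstoI) (use eventually_expected_max_deg_greater eventually_expected_max_deg_less in auto)
  then have "((\<lambda>n. measure_pmf.expectation (G n) (\<lambda>E. real (max_deg n E)) / ln (real n) * ln (1 / q))
      \<longlongrightarrow> 1 / ln (1 / q) * ln (1 / q)) sequentially"
    by (rule tendsto_mult_right)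
  then show "((\<lambda>n. measure_pmf.expectation (G n) (\<lambda>E. real (max_deg n E)) / (ln (real n) / ln (1 / q)))
      \<longlongrightarrow> 1) sequentially"
    using q by simp
qed

end

text \<open>
  The hypothesis \<open>qb < 1\<close> does not exclude \<open>qb \<le> 0\<close>; the sign conditions (which come from
  \<open>\<bar>d(n, k)\<bar> \<le> B qb ^ k\<close> at \<open>k = 1, 2\<close>) then force \<open>B qb ^ k = 0\<close> for \<open>k \<ge> 1\<close>.
\<close>

lemma geometric_majorant:
  fixes B qb :: real
  assumes "qb < 1" "0 \<le> B * qb" "0 \<le> B * qb\<^sup>2"
  shows "\<exists>p B'. 0 < p \<and> p < 1 \<and> (\<forall>k\<ge>1. B * qb ^ k \<le> B' * p ^ k)"
proof (cases "0 < qb")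
  case True
  then have "0 \<le> B"
    using assms(2) by (simp add: zero_le_mult_iff)
  then have "B * qb ^ k \<le> B * max qb (1 / 2) ^ k" for k
    using True by (intro mult_left_mono power_mono) auto
  then show ?thesis
    using assms(1) by (intro exI[of _ "max qb (1 / 2)"] exI[of _ B]) auto
next
  case False
  have "B * qb = 0"
  proof (cases "qb = 0")
    case False
    with \<open>\<not> 0 < qb\<close> have "qb < 0"
      by simp
    moreover have "0 \<le> (B * qb) * qb"
      using assms(3) by (simp add: power2_eq_square mult.assoc)
    ultimately show ?thesis
      using assms(2) by (simp add: zero_le_mult_iff)
  qed simp
  have "B * qb ^ k \<le> 0 * (1 / 2) ^ k" if "1 \<le> k" for k :: nat
  proof -
    obtain j where "k = Suc j"
      using \<open>1 \<le> k\<close> by (cases k) auto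
    then have "B * qb ^ k = (B * qb) * qb ^ j"
      by (simp add: mult.assoc)
    also have "\<dots> = 0"
      unfolding \<open>B * qb = 0\<close> by simp
    finally show ?thesis
      by (simp only: mult_zero_left order_refl)
  qed
  then show ?thesis
    by (intro exI[of _ "1 / 2"] exI[of _ 0]) auto
qed

theorem theorem1:
  fixes G :: "nat \<Rightarrow> (nat \<Rightarrow> nat \<Rightarrow> bool) pmf"
    and dbar :: "nat \<Rightarrow> real" and q :: real
  assumes graphs: "\<And>n E. n \<ge> 1 \<Longrightarrow> E \<in> set_pmf (G n) \<Longrightarrow> simple_graph_on n E"
    and q: "0 < q" "q < 1"
    and dbar_nonneg: "\<And>k. k \<ge> 1 \<Longrightarrow> dbar k \<ge> 0"
    and dbar_distr: "(\<lambda>k. dbar (Suc k)) sums 1"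
    and dbar_pos: "eventually (\<lambda>k. dbar k > 0) at_top"
    and dbar_log: "(\<lambda>k. ln (dbar k)) \<sim>[at_top] (\<lambda>k. real k * ln q)"
    and unif: "\<And>C \<epsilon>. C > 0 \<Longrightarrow> \<epsilon> > 0 \<Longrightarrow> \<exists>N K. \<forall>n\<ge>N. \<forall>k l.
                 K \<le> k \<and> real k \<le> C * ln (real n) \<and> K \<le> l \<and> real l \<le> C * ln (real n) \<longrightarrow>
                 \<bar>dnk G n k - dbar k\<bar> \<le> \<epsilon> * dbar k \<and>
                 \<bar>dnkl G n k l - dbar k * dbar l\<bar> \<le> \<epsilon> * (dbar k * dbar l)"
    and bound: "\<exists>qb B. qb < 1 \<and> (\<forall>n\<ge>1. \<forall>k\<ge>1. \<forall>l\<ge>1.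
                 \<bar>dnk G n k\<bar> \<le> B * qb ^ k \<and> \<bar>dnkl G n k l\<bar> \<le> B * qb ^ (k + l))"
  shows "(\<forall>\<epsilon>>0. (\<lambda>n. measure_pmf.prob (G n)
            {E. \<bar>real (max_deg n E) / ln (real n) - 1 / ln (1 / q)\<bar> > \<epsilon>}) \<longlonglongrightarrow> 0) \<and>
         ((\<lambda>n. measure_pmf.expectation (G n) (\<lambda>E. real (max_deg n E)))
            \<sim>[at_top] (\<lambda>n. ln (real n) / ln (1 / q)))"
proof -
  obtain qb B0 where qb: "qb < 1" and dnk_bound: "\<And>n k. 1 \<le> n \<Longrightarrow> 1 \<le> k \<Longrightarrow> \<bar>dnk G n k\<bar> \<le> B0 * qb ^ k"
    using bound by metis
  have "0 \<le> B0 * qb" "0 \<le> B0 * qb\<^sup>2"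
    using dnk_bound[of 1 1] dnk_bound[of 1 2] by (auto simp: power2_eq_square)
  then obtain p B where p: "0 < p" "p < 1" and majorant: "\<forall>k\<ge>1. B0 * qb ^ k \<le> B * p ^ k"
    using geometric_majorant[OF qb] by blast
  have "dnk G n k \<le> B * p ^ k" if "1 \<le> n" "1 \<le> k" for n k
    using dnk_bound[OF that] majorant that by (meson abs_ge_self order.trans)
  then interpret degree_model G dbar q p B
    using q dbar_pos dbar_log unif p by unfold_locales
  show ?thesis
    using max_deg_over_ln_tendsto_in_probability expected_max_deg_asymp_equiv by blast
qed

end
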